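(* Let $n\ge 2$ and let $(G(k))_{k\in\mathbb{N}}$ be a sequence of digraphs on $\mathcal{V}=\{1,\dots,n\}$ with knowledge sets evolving by the flooding update described in the context. Let $\psi(k)=n$ for $k\le\lceil n/2\rceil-1$ and $\psi(k)=n-k$ for $k\ge\lceil n/2\rceil$; let $\nu(k)=k+2$ for $k\le\lceil n/2\rceil-1$ and $\nu(k)=n$ for $k\ge\lceil n/2\rceil$; and let $\eta(k)=\min\{\psi(k),\nu(k)\}$. If for every $k\in\{0,1,\dots,n-2\}$ the digraph $G(k)$ contains $\eta(k)(k)$, then $\sum_{i=1}^n|\mathcal{K}_i(n-1)|=n^2$.
   Context: Network: $\mathcal{V}=\{1,\dots,n\}$; node $i$ holds initial data $d_i\in\mathbb{R}$, pairwise distinct. At discrete times $k\in\mathbb{N}$ communication follows digraph $G(k)=(\mathcal{V},\mathcal{E}(k))$; node $i$ sends to $j$ at time $k$ iff $(i,j)\in\mathcal{E}(k)$. Knowledge sets: $\mathcal{K}_i(0)=\{d_i\}$ and $\mathcal{K}_j(k+1)=\mathcal{K}_j(k)\cup\bigcup_{i:(i,j)\in\mathcal{E}(k)}\mathcal{K}_i(k)$. An input-cord to node $i$ at time $k$ is an ordered list $(\mathcal{I}^i_1,\dots,\mathcal{I}^i_m)$ of pairwise distinct nodes of $\mathcal{V}\setminus\{i\}$ with $(\mathcal{I}^i_j,\mathcal{I}^i_{j+1})\in\mathcal{E}(k)$ for $j=1,\dots,m-1$ and $(\mathcal{I}^i_m,i)\in\mathcal{E}(k)$; its cardinality is $m$.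 It is closed if moreover $(i,\mathcal{I}^i_1)\in\mathcal{E}(k)$. For an integer $\chi$, node $i$ is contained in a $\chi(k)$-cycle if it has at time $k$ a closed input-cord of cardinality greater than $\chi-2$; $G(k)$ contains $\chi(k)$ if every node is contained in a $\chi(k)$-cycle. *)

theory Defs
  imports Complex_Main
begin

type_synonym graph_seq = "nat \<Rightarrow> (nat \<times> nat) set"

primrec know :: "graph_seq \<Rightarrow> (nat \<Rightarrow> 'a) \<Rightarrow> nat \<Rightarrow> nat \<Rightarrow> 'a set" where
  "know E d 0 j = {d j}"
| "know E d (Suc k) j = know E d k j \<union> (\<Union>i\<in>{i. (i, j) \<in> E k}. know E d k i)"

definition input_cord :: "nat \<Rightarrow> graph_seq \<Rightarrow> nat \<Rightarrow> nat \<Rightarrow> nat list \<Rightarrow> bool" where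
  "input_cord n E k i cs \<longleftrightarrow>
     cs \<noteq> [] \<and> distinct cs \<and> set cs \<subseteq> {1..n} - {i} \<and>
     (\<forall>j. Suc j < length cs \<longrightarrow> (cs ! j, cs ! Suc j) \<in> E k) \<and>
     (last cs, i) \<in> E k"

definition closed_input_cord :: "nat \<Rightarrow> graph_seq \<Rightarrow> nat \<Rightarrow> nat \<Rightarrow> nat list \<Rightarrow> bool" where
  "closed_input_cord n E k i cs \<longleftrightarrow> input_cord n E k i cs \<and> (i, hd cs) \<in> E k"

definition in_chi_cycle :: "nat \<Rightarrow> graph_seq \<Rightarrow> int \<Rightarrow> nat \<Rightarrow> nat \<Rightarrow> bool" where
  "in_chi_cycle n E chi k i \<longleftrightarrow>
     (\<exists>cs. closed_input_cord n E k i cs \<and> int (length cs) > chi - 2)"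

definition contains_chi :: "nat \<Rightarrow> graph_seq \<Rightarrow> int \<Rightarrow> nat \<Rightarrow> bool" where
  "contains_chi n E chi k \<longleftrightarrow> (\<forall>i\<in>{1..n}. in_chi_cycle n E chi k i)"

text \<open>ceil(n/2) = (n+1) div 2 for natural n.\<close>
definition psi :: "nat \<Rightarrow> nat \<Rightarrow> int" where
  "psi n k = (if k \<le> (n + 1) div 2 - 1 then int n else int n - int k)"

definition nu :: "nat \<Rightarrow> nat \<Rightarrow> int" where
  "nu n k = (if k \<le> (n + 1) div 2 - 1 then int k + 2 else int n)"

definition eta :: "nat \<Rightarrow> nat \<Rightarrow> int" where
  "eta n k = min (psi n k) (nu n k)"

end

theory Submission
  imports Defs
begin

text \<open>Follow a single datum d x through the flooding process and let S(k) be the set of nodes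
  that know it at time k. If S(k+1) = S(k), then S(k) is closed under the edges of G(k). A closed
  cycle through a node of S stays inside S, and one through a node outside S stays outside S;
  so if S is a nonempty proper subset, G(k) containing chi forces chi \<le> |S| and chi \<le> n - |S|.
  For |S(k)| = k + 1 both bounds together contradict the choice of eta(k). Hence S(k) grows by at
  least one node per step, and after n - 1 steps every node knows every datum.\<close>

lemma know_subset_data:
  assumes "\<And>k. E k \<subseteq> {1..n} \<times> {1..n}" and "i \<in> {1..n}"
  shows "know E d k i \<subseteq> d ` {1..n}"
  using assms(2)
proof (induction k arbitrary: i)
  case 0
  then show ?case by auto
next
  case (Suc k)
  have "\<And>j. (j, i) \<in> E k \<Longrightarrow> j \<in> {1..n}" using assms(1) by blast
  with Suc show ?case by auto
qed

definition closed_under :: "(nat \<times> nat) set \<Rightarrow> nat set \<Rightarrow> bool" where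
  "closed_under R S \<longleftrightarrow> (\<forall>a b. (a, b) \<in> R \<longrightarrow> a \<in> S \<longrightarrow> b \<in> S)"

lemma input_cord_stays_closed:
  assumes cl: "closed_under (E k) S" and cs: "input_cord n E k i cs"
    and "cs ! j \<in> S" and "j \<le> l" and "l < length cs"
  shows "cs ! l \<in> S"
  using assms(4,5)
proof (induction l rule: dec_induct)
  case base
  then show ?case using \<open>cs ! j \<in> S\<close> by simp
next
  case (step m)
  have "(cs ! m, cs ! Suc m) \<in> E k" using cs step unfolding input_cord_def by auto
  with cl step show ?case unfolding closed_under_def by auto
qed

lemma closed_input_cord_subset:
  assumes cl: "closed_under (E k) S" and cs: "closed_input_cord n E k i cs" and "i \<in> S"
  shows "set cs \<subseteq> S"
proof
  fix x assume "x \<in> set cs"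
  then obtain l where l: "l < length cs" "x = cs ! l" by (auto simp: in_set_conv_nth)
  have ic: "input_cord n E k i cs" and "(i, hd cs) \<in> E k"
    using cs unfolding closed_input_cord_def by auto
  moreover have "cs \<noteq> []" using ic unfolding input_cord_def by simp
  ultimately have "cs ! 0 \<in> S" using cl \<open>i \<in> S\<close> by (simp add: hd_conv_nth closed_under_def)
  with input_cord_stays_closed[OF cl ic] l show "x \<in> S" by simp
qed

lemma input_cord_disjoint:
  assumes cl: "closed_under (E k) S" and cs: "input_cord n E k i cs" and "i \<notin> S"
  shows "set cs \<inter> S = {}"
proof (rule ccontr)
  assume "set cs \<inter> S \<noteq> {}"
  then obtain j where j: "j < length cs" "cs ! j \<in> S" by (auto simp: in_set_conv_nth)
  then have "cs ! (length cs - 1) \<in> S"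
    using input_cord_stays_closed[OF cl cs j(2)] by simp
  moreover have "cs \<noteq> []" and "(last cs, i) \<in> E k" using cs unfolding input_cord_def by auto
  ultimately show False using cl \<open>i \<notin> S\<close> by (simp add: last_conv_nth closed_under_def)
qed

lemma card_insert_distinct:
  "distinct xs \<Longrightarrow> x \<notin> set xs \<Longrightarrow> card (insert x (set xs)) = length xs + 1"
  by (simp add: distinct_card)

lemma in_chi_cycle_inside_closed:
  assumes "in_chi_cycle n E chi k i" and "closed_under (E k) S" and "finite S" and "i \<in> S"
  shows "chi \<le> int (card S)"
proof -
  obtain cs where cs: "closed_input_cord n E k i cs" "int (length cs) > chi - 2"
    using assms(1) unfolding in_chi_cycle_def by blast
  have "distinct cs" "i \<notin> set cs"
    using cs(1) unfolding closed_input_cord_def input_cord_def by auto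
  moreover have "insert i (set cs) \<subseteq> S"
    using closed_input_cord_subset[OF assms(2) cs(1) assms(4)] assms(4) by blast
  ultimately have "length cs + 1 \<le> card S"
    using card_mono[OF assms(3)] card_insert_distinct by metis
  with cs(2) show ?thesis by linarith
qed

lemma in_chi_cycle_outside_closed:
  assumes "in_chi_cycle n E chi k i" and "closed_under (E k) S" and "i \<in> {1..n} - S"
  shows "chi \<le> int (card ({1..n} - S))"
proof -
  obtain cs where cs: "closed_input_cord n E k i cs" "int (length cs) > chi - 2"
    using assms(1) unfolding in_chi_cycle_def by blast
  have ic: "input_cord n E k i cs" using cs(1) unfolding closed_input_cord_def by simp
  then have "distinct cs" "i \<notin> set cs" "set cs \<subseteq> {1..n}"
    unfolding input_cord_def by auto
  moreover have "insert i (set cs) \<subseteq> {1..n} - S"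
    using input_cord_disjoint[OF assms(2) ic] assms(3) \<open>set cs \<subseteq> {1..n}\<close> by blast
  ultimately have "length cs + 1 \<le> card ({1..n} - S)"
    using card_mono[of "{1..n} - S"] card_insert_distinct by (metis finite_Diff finite_atLeastAtMost)
  with cs(2) show ?thesis by linarith
qed

lemma contains_chi_closed_subset_bounds:
  assumes "contains_chi n E chi k" and "closed_under (E k) S" and "S \<subseteq> {1..n}"
    and "S \<noteq> {}" and "S \<noteq> {1..n}"
  shows "chi \<le> int (card S)" and "chi \<le> int n - int (card S)"
proof -
  obtain i where "i \<in> S" using assms(4) by blast
  moreover obtain i' where "i' \<in> {1..n} - S" using assms(3,5) by blast
  moreover have "finite S" using assms(3) finite_subset by blast
  ultimately have "chi \<le> int (card S)" "chi \<le> int (card ({1..n} - S))"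
    using assms(1-3) in_chi_cycle_inside_closed in_chi_cycle_outside_closed
    unfolding contains_chi_def by blast+
  moreover have "card ({1..n} - S) = n - card S"
    using assms(3) \<open>finite S\<close> by (simp add: card_Diff_subset)
  moreover have "card S \<le> n" using assms(3) card_mono[of "{1..n}" S] by simp
  ultimately show "chi \<le> int (card S)" and "chi \<le> int n - int (card S)" by simp_all
qed

lemma eta_exceeds: "int k + 1 < eta n k \<or> int n - int k - 1 < eta n k"
  unfolding eta_def psi_def nu_def by auto

definition informed :: "nat \<Rightarrow> graph_seq \<Rightarrow> (nat \<Rightarrow> 'a) \<Rightarrow> nat \<Rightarrow> nat \<Rightarrow> nat set" where
  "informed n E d k x = {i \<in> {1..n}. d x \<in> know E d k i}"

lemma informed_mono_Suc: "informed n E d k x \<subseteq> informed n E d (Suc k) x"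
  unfolding informed_def by auto

lemma informed_stable_imp_closed:
  assumes "E k \<subseteq> {1..n} \<times> {1..n}" and "informed n E d (Suc k) x = informed n E d k x"
  shows "closed_under (E k) (informed n E d k x)"
  unfolding closed_under_def
proof (intro allI impI)
  fix a b assume "(a, b) \<in> E k" "a \<in> informed n E d k x"
  with assms(1) have "b \<in> informed n E d (Suc k) x" unfolding informed_def by auto
  with assms(2) show "b \<in> informed n E d k x" by simp
qed

lemma card_informed_ge:
  assumes "\<And>k. E k \<subseteq> {1..n} \<times> {1..n}"
    and "\<And>k. k \<le> n - 2 \<Longrightarrow> contains_chi n E (eta n k) k"
    and "x \<in> {1..n}" and "k < n"
  shows "k + 1 \<le> card (informed n E d k x)"
  using assms(4)
proof (induction k)
  case 0
  have "{x} \<subseteq> informed n E d 0 x" using assms(3) unfolding informed_def by simp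
  moreover have "finite (informed n E d 0 x)" unfolding informed_def by simp
  ultimately have "card {x} \<le> card (informed n E d 0 x)" by (rule card_mono[rotated])
  then show ?case by simp
next
  case (Suc k)
  let ?S = "informed n E d k x" and ?S' = "informed n E d (Suc k) x"
  have fin: "finite ?S'" unfolding informed_def by simp
  show ?case
  proof (cases "card ?S = k + 1")
    case card_S: True
    have "?S' \<noteq> ?S"
    proof
      assume "?S' = ?S"
      then have closed: "closed_under (E k) ?S" by (rule informed_stable_imp_closed[OF assms(1)])
      have sub: "?S \<subseteq> {1..n}" unfolding informed_def by auto
      have nonempty: "?S \<noteq> {}" using card_S by auto
      have proper: "?S \<noteq> {1..n}" using card_S Suc.prems by auto
      have "contains_chi n E (eta n k) k" using Suc.prems by (intro assms(2)) simp
      note bounds = contains_chi_closed_subset_bounds[OF this closed sub nonempty proper]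
      from bounds card_S eta_exceeds[of k n] show False by linarith
    qed
    then have "card ?S < card ?S'" by (intro psubset_card_mono fin) (use informed_mono_Suc in blast)
    with card_S show ?thesis by simp
  next
    case False
    with Suc have "k + 2 \<le> card ?S" by simp
    with card_mono[OF fin informed_mono_Suc] show ?thesis by simp
  qed
qed

lemma know_complete:
  assumes "0 < n"
    and "\<And>k. E k \<subseteq> {1..n} \<times> {1..n}"
    and "\<And>k. k \<le> n - 2 \<Longrightarrow> contains_chi n E (eta n k) k"
    and "i \<in> {1..n}"
  shows "know E d (n - 1) i = d ` {1..n}"
proof
  show "know E d (n - 1) i \<subseteq> d ` {1..n}" using know_subset_data[OF assms(2,4)] .
  show "d ` {1..n} \<subseteq> know E d (n - 1) i"
  proof
    fix y assume "y \<in> d ` {1..n}"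
    then obtain x where x: "x \<in> {1..n}" "y = d x" by auto
    have "n \<le> card (informed n E d (n - 1) x)"
      using card_informed_ge[OF assms(2,3) x(1), of "n - 1"] assms(1) by simp
    moreover have "informed n E d (n - 1) x \<subseteq> {1..n}" unfolding informed_def by auto
    ultimately have "informed n E d (n - 1) x = {1..n}" using card_seteq[of "{1..n}"] by simp
    with assms(4) x(2) show "y \<in> know E d (n - 1) i" unfolding informed_def by blast
  qed
qed

theorem theorem3:
  fixes n :: nat and E :: graph_seq and d :: "nat \<Rightarrow> real"
  assumes "n \<ge> 2"
    and "\<And>k. E k \<subseteq> {1..n} \<times> {1..n}"
    and "inj_on d {1..n}"
    and "\<And>k. k \<le> n - 2 \<Longrightarrow> contains_chi n E (eta n k) k"
  shows "(\<Sum>i\<in>{1..n}. card (know E d (n - 1) i)) = n ^ 2"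
proof -
  have "card (know E d (n - 1) i) = n" if "i \<in> {1..n}" for i
    using know_complete[where d = d, OF _ assms(2,4) that] assms(1,3) by (simp add: card_image)
  then show ?thesis by (simp add: power2_eq_square)
qed

end
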